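(* Let $\mathcal{A}=\{0,1\}$ and $\mathcal{F}=\{(0,0,0),(1,1,1)\}$, where $(a,b,c)$ denotes the $2$-block $u$ with $u_\epsilon=a$, $u_0=b$, $u_1=c$. Then $\mathsf{X}_{\mathcal{F}}$ is strongly irreducible with complete prefix code $P=\{0,10,11\}$, and it is not uniformly block gluing.
   Context: $\Sigma=\{0,1\}$. $\Sigma^*$ is the set of finite words, with $\epsilon$ the empty word. $\Sigma^k$ is the set of words of length $k$, and $\Sigma_n=\bigcup_{0\le k\le n}\Sigma^k$. A tree is $t:\Sigma^*\to\mathcal{A}$, and we write $t_x=t(x)$. A pattern $u$ is a map on a finite prefix-closed support $S(u)$. $\mathsf{X}_{\mathcal{F}}$ is the set of trees in which no pattern of $\mathcal{F}$ occurs at any node; here it is the set of trees $t$ such that for no $x$ do $t_x=t_{x0}=t_{x1}$ hold. A pattern is accepted by $X$ if it occurs in some $t\in X$. $B_n(X)=\{t|_{\Sigma_{n-1}}:t\in X\}$. For $w\in\Sigma^*$, $t|_{wS(v)}=v$ means $t_{wy}=v_y$ for all $y\in S(v)$. A leaf of $u$ is $w\in S(u)$ with $w0,w1\notin S(u)$. A complete prefix code (CPC) is a finite set $P\subseteq\Sigma^*\setminus\{\epsilon\}$ such that no word of $P$ is a prefix of another, and every $x$ with $|x|\ge\max_{y\in P}|y|$ has a prefix in $P$. Patterns $u,v$ are connected through $P$ if there is $t\in X$ with $t|_{S(u)}=u$ and $t|_{wxS(v)}=v$ for every leaf $w$ of $u$ and every $x\in P$. $X$ is strongly irreducible with CPC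 $P$ if any two patterns accepted by $X$ are connected through $P$. $X$ is uniformly block gluing if there is $k\ge1$ such that for every $n\ge1$ any $u,v\in B_n(X)$ are connected through $\Sigma^k$. *)

theory Defs
  imports Main
begin

text \<open>Words over Sigma = {0,1} are bool lists (False = 0, True = 1).\<close>

type_synonym word = "bool list"
type_synonym 'a tree = "word \<Rightarrow> 'a"
type_synonym 'a pattern = "word \<rightharpoonup> 'a"

definition is_pattern :: "'a pattern \<Rightarrow> bool" where
  "is_pattern u \<longleftrightarrow> finite (dom u) \<and> (\<forall>x y. x @ y \<in> dom u \<longrightarrow> x \<in> dom u)"

definition occurs_at :: "'a pattern \<Rightarrow> 'a tree \<Rightarrow> word \<Rightarrow> bool" where
  "occurs_at v t w \<longleftrightarrow> (\<forall>y\<in>dom v. v y = Some (t (w @ y)))"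

definition X_F :: "'a pattern set \<Rightarrow> 'a tree set" where
  "X_F F = {t. \<forall>x. \<forall>u\<in>F. \<not> occurs_at u t x}"

definition accepted :: "'a tree set \<Rightarrow> 'a pattern \<Rightarrow> bool" where
  "accepted X u \<longleftrightarrow> is_pattern u \<and> (\<exists>t\<in>X. \<exists>x. occurs_at u t x)"

definition Sigma_le :: "nat \<Rightarrow> word set" where
  "Sigma_le n = {x. length x \<le> n}"

definition Sigma_eq :: "nat \<Rightarrow> word set" where
  "Sigma_eq k = {x. length x = k}"

definition blocks :: "nat \<Rightarrow> 'a tree set \<Rightarrow> 'a pattern set" where
  "blocks n X = {(\<lambda>x. if x \<in> Sigma_le (n - 1) then Some (t x) else None) | t. t \<in> X}"

definition leaf :: "'a pattern \<Rightarrow> word \<Rightarrow> bool" where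
  "leaf u w \<longleftrightarrow> w \<in> dom u \<and> w @ [False] \<notin> dom u \<and> w @ [True] \<notin> dom u"

definition is_CPC :: "word set \<Rightarrow> bool" where
  "is_CPC P \<longleftrightarrow> finite P \<and> [] \<notin> P \<and>
     (\<forall>p\<in>P. \<forall>q\<in>P. (\<exists>z. q = p @ z) \<longrightarrow> p = q) \<and>
     (\<forall>x. (\<forall>y\<in>P. length y \<le> length x) \<longrightarrow> (\<exists>p\<in>P. \<exists>z. x = p @ z))"

definition connected_through :: "'a tree set \<Rightarrow> 'a pattern \<Rightarrow> 'a pattern \<Rightarrow> word set \<Rightarrow> bool" where
  "connected_through X u v P \<longleftrightarrow>
     (\<exists>t\<in>X. occurs_at u t [] \<and> (\<forall>w x. leaf u w \<longrightarrow> x \<in> P \<longrightarrow> occurs_at v t (w @ x)))"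

definition strongly_irreducible_with :: "'a tree set \<Rightarrow> word set \<Rightarrow> bool" where
  "strongly_irreducible_with X P \<longleftrightarrow> is_CPC P \<and>
     (\<forall>u v. accepted X u \<longrightarrow> accepted X v \<longrightarrow> connected_through X u v P)"

definition uniformly_block_gluing :: "'a tree set \<Rightarrow> bool" where
  "uniformly_block_gluing X \<longleftrightarrow> (\<exists>k\<ge>1. \<forall>n\<ge>1. \<forall>u\<in>blocks n X. \<forall>v\<in>blocks n X.
     connected_through X u v (Sigma_eq k))"

definition block3 :: "'a \<Rightarrow> 'a \<Rightarrow> 'a \<Rightarrow> 'a pattern" where
  "block3 a b c = [[] \<mapsto> a, [False] \<mapsto> b, [True] \<mapsto> c]"

end

theory Submission
  imports Defs
begin

text \<open>A tree avoids both forbidden blocks iff no node carries the same symbol as both of its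
  children. Strong irreducibility: keep the tree realising \<open>u\<close> everywhere except strictly below
  the leaves of \<open>u\<close>; below a leaf \<open>w\<close> put a copy of the tree realising \<open>v\<close> at \<open>w0\<close>, \<open>w10\<close> and
  \<open>w11\<close>, and give \<open>w1\<close> the symbol opposite to the root of \<open>v\<close>. Then \<open>w\<close> and \<open>w1\<close> both have two
  different children, so no forbidden block is created.
  Uniform block gluing fails because any admissible tree that is constant on a whole level \<open>k\<close>
  must alternate between consecutive levels above it, so its root is determined by the parity of
  \<open>k\<close>; gluing a one-node block of the wrong value to copies of one fixed symbol at distance \<open>k\<close> is
  impossible.\<close>

abbreviation no_mono_forks :: "bool tree set" where
  "no_mono_forks \<equiv> X_F {block3 False False False, block3 True True True}"

definition mono_fork :: "bool tree \<Rightarrow> word \<Rightarrow> bool" where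
  "mono_fork t x \<longleftrightarrow> t (x @ [False]) = t x \<and> t (x @ [True]) = t x"

lemma mem_no_mono_forks_iff: "t \<in> no_mono_forks \<longleftrightarrow> (\<forall>x. \<not> mono_fork t x)"
  unfolding X_F_def occurs_at_def block3_def mono_fork_def by auto

lemma occurs_at_shift: "occurs_at v t (x @ y) \<longleftrightarrow> occurs_at v (\<lambda>z. t (x @ z)) y"
  unfolding occurs_at_def by simp

lemma X_F_shift:
  assumes "t \<in> X_F F"
  shows "(\<lambda>z. t (x @ z)) \<in> X_F F"
  using assms unfolding X_F_def by (simp flip: occurs_at_shift)

lemma is_CPC_0_10_11: "is_CPC {[False], [True, False], [True, True]}"
  unfolding is_CPC_def
proof (intro conjI allI impI)
  fix x :: word
  assume "\<forall>y\<in>{[False], [True, False], [True, True]}. length y \<le> length x"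
  then obtain a b z where "x = a # b # z"
    by (cases x; cases "tl x") auto
  then show "\<exists>p\<in>{[False], [True, False], [True, True]}. \<exists>z. x = p @ z"
    by (cases a; cases b) auto
qed auto

lemma leaf_extension_in_dom:
  assumes "is_pattern u" and "leaf u w" and "w @ e \<in> dom u"
  shows "e = []"
proof (cases e)
  case (Cons b e')
  with assms(3) have "(w @ [b]) @ e' \<in> dom u" by simp
  with assms(1) have "w @ [b] \<in> dom u" unfolding is_pattern_def by blast
  with assms(2) show ?thesis unfolding leaf_def by (cases b) auto
qed

lemma below_leaf_unique:
  assumes "is_pattern u" and "leaf u w" and "leaf u w'"
    and "z \<noteq> []" and "z' \<noteq> []" and "w @ z = w' @ z'"
  shows "z = z'"
proof -
  from assms(6) obtain e where "w' = w @ e \<and> z = e @ z' \<or> w = w' @ e \<and> z' = e @ z"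
    by (auto simp: append_eq_append_conv2)
  then show ?thesis
    using leaf_extension_in_dom[OF assms(1) assms(2)] leaf_extension_in_dom[OF assms(1) assms(3)]
      assms(2,3) unfolding leaf_def by auto
qed

text \<open>Below each leaf \<open>w\<close> of \<open>u\<close> the tree \<open>graft u r h\<close> is \<open>h\<close>, except that \<open>w\<close> itself
  keeps its value in \<open>r\<close>: the root value of \<open>h\<close> is never used.\<close>

definition strictly_below_leaf :: "'a pattern \<Rightarrow> word \<Rightarrow> bool" where
  "strictly_below_leaf u y \<longleftrightarrow> (\<exists>w z. leaf u w \<and> z \<noteq> [] \<and> y = w @ z)"

definition graft :: "'a pattern \<Rightarrow> 'a tree \<Rightarrow> 'a tree \<Rightarrow> 'a tree" where
  "graft u r h y = (if strictly_below_leaf u y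
     then h (THE z. \<exists>w. leaf u w \<and> z \<noteq> [] \<and> y = w @ z) else r y)"

lemma graft_below_leaf:
  assumes "is_pattern u" and "leaf u w" and "z \<noteq> []"
  shows "graft u r h (w @ z) = h z"
proof -
  have "(THE z'. \<exists>w'. leaf u w' \<and> z' \<noteq> [] \<and> w @ z = w' @ z') = z"
    using assms below_leaf_unique[OF assms(1,2)] by (intro the_equality) blast+
  then show ?thesis
    using assms unfolding graft_def strictly_below_leaf_def by auto
qed

lemma graft_not_below_leaf: "\<not> strictly_below_leaf u y \<Longrightarrow> graft u r h y = r y"
  unfolding graft_def by simp

lemma not_strictly_below_leaf_dom:
  "is_pattern u \<Longrightarrow> y \<in> dom u \<Longrightarrow> \<not> strictly_below_leaf u y"
  unfolding strictly_below_leaf_def using leaf_extension_in_dom by blast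

lemma strictly_below_leaf_snoc:
  assumes "strictly_below_leaf u (y @ [b])"
  shows "leaf u y \<or> strictly_below_leaf u y"
proof -
  from assms obtain w z where "leaf u w" "z \<noteq> []" "y @ [b] = w @ z"
    unfolding strictly_below_leaf_def by blast
  then show ?thesis
  proof (cases z rule: rev_cases)
    case (snoc z' b')
    with \<open>y @ [b] = w @ z\<close> have "y = w @ z'" by simp
    with \<open>leaf u w\<close> show ?thesis
      unfolding strictly_below_leaf_def by (cases "z' = []") auto
  qed simp
qed

lemma graft_mem_no_mono_forks:
  assumes p: "is_pattern u" and r: "r \<in> no_mono_forks" and h: "h \<in> no_mono_forks"
    and root_split: "h [False] \<noteq> h [True]"
  shows "graft u r h \<in> no_mono_forks"
  unfolding mem_no_mono_forks_iff
proof
  fix y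
  consider "strictly_below_leaf u y" | "leaf u y"
    | "\<not> strictly_below_leaf u y" "\<not> leaf u y" by blast
  then show "\<not> mono_fork (graft u r h) y"
  proof cases
    case 1
    then obtain w z where w: "leaf u w" and "z \<noteq> []" and "y = w @ z"
      unfolding strictly_below_leaf_def by blast
    then have "graft u r h (y @ e) = h (z @ e)" for e
      using graft_below_leaf[OF p w] by simp
    with h show ?thesis
      unfolding mem_no_mono_forks_iff mono_fork_def by (metis append_Nil2)
  next
    case 2
    have "graft u r h (y @ [b]) = h [b]" for b
      using graft_below_leaf[OF p 2, of "[b]"] by simp
    with root_split show ?thesis
      unfolding mono_fork_def by metis
  next
    case 3
    from 3 have "\<not> strictly_below_leaf u (y @ [b])" for b
      using strictly_below_leaf_snoc by blast
    then have "graft u r h (y @ [b]) = r (y @ [b])" for b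
      by (simp add: graft_not_below_leaf)
    moreover have "graft u r h y = r y"
      using 3 by (simp add: graft_not_below_leaf)
    ultimately show ?thesis
      using r unfolding mem_no_mono_forks_iff mono_fork_def by metis
  qed
qed

definition code_tree :: "bool tree \<Rightarrow> bool tree" where
  "code_tree s z = (case z of
     [] \<Rightarrow> s [] | False # d \<Rightarrow> s d | [True] \<Rightarrow> \<not> s [] | True # _ # d \<Rightarrow> s d)"

lemma code_tree_mem_no_mono_forks:
  assumes "s \<in> no_mono_forks"
  shows "code_tree s \<in> no_mono_forks"
  unfolding mem_no_mono_forks_iff
proof
  fix z
  have s: "\<not> mono_fork s d" for d
    using assms unfolding mem_no_mono_forks_iff by blast
  show "\<not> mono_fork (code_tree s) z"
  proof (cases z)
    case Nil
    then show ?thesis by (simp add: mono_fork_def code_tree_def)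
  next
    case (Cons c d)
    then show ?thesis
      using s[of d] s[of "tl d"]
      by (cases c; cases d) (simp_all add: mono_fork_def code_tree_def)
  qed
qed

lemma code_tree_prefix_code:
  "p \<in> {[False], [True, False], [True, True]} \<Longrightarrow> code_tree s (p @ y) = s y"
  unfolding code_tree_def by auto

lemma no_mono_forks_connected_through_0_10_11:
  assumes "accepted no_mono_forks u" and "accepted no_mono_forks v"
  shows "connected_through no_mono_forks u v {[False], [True, False], [True, True]}"
proof -
  obtain t1 x1 where t1: "t1 \<in> no_mono_forks" and u: "occurs_at u t1 x1" and p: "is_pattern u"
    using assms(1) unfolding accepted_def by blast
  obtain t2 x2 where t2: "t2 \<in> no_mono_forks" and v: "occurs_at v t2 x2"
    using assms(2) unfolding accepted_def by blast
  define r where "r = (\<lambda>z. t1 (x1 @ z))"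
  define s where "s = (\<lambda>z. t2 (x2 @ z))"
  define t where "t = graft u r (code_tree s)"
  have "t \<in> no_mono_forks"
    unfolding t_def using X_F_shift[OF t1, of x1] X_F_shift[OF t2, of x2]
    by (intro graft_mem_no_mono_forks p code_tree_mem_no_mono_forks)
      (auto simp flip: r_def s_def simp: code_tree_def)
  moreover have "occurs_at u t []"
    using u not_strictly_below_leaf_dom[OF p]
    unfolding occurs_at_def t_def r_def by (auto simp: graft_not_below_leaf)
  moreover have "occurs_at v t (w @ q)"
    if w: "leaf u w" and q: "q \<in> {[False], [True, False], [True, True]}" for w q
  proof -
    have "t ((w @ q) @ y) = s y" for y
      using graft_below_leaf[OF p w, of "q @ y"] code_tree_prefix_code[OF q] q
      unfolding t_def by auto
    then show ?thesis
      using v unfolding occurs_at_def s_def by simp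
  qed
  ultimately show ?thesis
    unfolding connected_through_def by blast
qed

lemma no_mono_forks_level_constant:
  assumes t: "t \<in> no_mono_forks" and level: "\<forall>x. length x = k \<longrightarrow> t x = c"
  shows "length y + m = k \<Longrightarrow> t y = (c \<longleftrightarrow> even m)"
proof (induction m arbitrary: y)
  case 0
  then show ?case using level by simp
next
  case (Suc m)
  then have "t (y @ [False]) = (c \<longleftrightarrow> even m)" "t (y @ [True]) = (c \<longleftrightarrow> even m)"
    by simp_all
  with t show ?case
    unfolding mem_no_mono_forks_iff mono_fork_def by (metis even_Suc)
qed

lemma alternating_mem_no_mono_forks: "(\<lambda>x. even (length x) = a) \<in> no_mono_forks"
  unfolding mem_no_mono_forks_iff mono_fork_def by auto

lemma root_mem_blocks_1: "t \<in> X \<Longrightarrow> [[] \<mapsto> t []] \<in> blocks 1 X"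
  unfolding blocks_def Sigma_le_def by (auto intro!: exI[of _ t])

lemma leaf_singleton: "leaf [[] \<mapsto> a] []"
  unfolding leaf_def by simp

lemma occurs_at_singleton: "occurs_at [[] \<mapsto> a] t x \<longleftrightarrow> t x = a"
  unfolding occurs_at_def by auto

lemma no_mono_forks_not_uniformly_block_gluing: "\<not> uniformly_block_gluing no_mono_forks"
proof
  assume "uniformly_block_gluing no_mono_forks"
  then obtain k where glue: "\<forall>u\<in>blocks 1 no_mono_forks. \<forall>v\<in>blocks 1 no_mono_forks.
      connected_through no_mono_forks u v (Sigma_eq k)"
    unfolding uniformly_block_gluing_def by blast
  have "[[] \<mapsto> a] \<in> blocks 1 no_mono_forks" for a
    using root_mem_blocks_1[OF alternating_mem_no_mono_forks[of a]] by simp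
  with glue obtain t where t: "t \<in> no_mono_forks" and "occurs_at [[] \<mapsto> odd k] t []"
    and glued: "\<forall>w x. leaf [[] \<mapsto> odd k] w \<longrightarrow> x \<in> Sigma_eq k \<longrightarrow> occurs_at [[] \<mapsto> True] t (w @ x)"
    unfolding connected_through_def by blast
  then have root: "t [] = odd k"
    by (simp add: occurs_at_singleton)
  have level: "\<forall>x. length x = k \<longrightarrow> t x = True"
    using glued[rule_format, OF leaf_singleton] unfolding Sigma_eq_def
    by (simp add: occurs_at_singleton)
  have "t [] = even k"
    using no_mono_forks_level_constant[OF t, of k True "[]" k] level by simp
  with root show False by simp
qed

theorem mainTheorem9:
  fixes F :: "bool pattern set"
  defines "F \<equiv> {block3 False False False, block3 True True True}"
  shows "strongly_irreducible_with (X_F F) {[False], [True, False], [True, True]}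
         \<and> \<not> uniformly_block_gluing (X_F F)"
  unfolding F_def strongly_irreducible_with_def
  using is_CPC_0_10_11 no_mono_forks_connected_through_0_10_11
    no_mono_forks_not_uniformly_block_gluing by blast

end
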